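(* Let $G$ be a graph on $n$ vertices which is neither the empty (edgeless) graph nor the complete graph. Then \[\operatorname{scp}(G)+\operatorname{scp}(\overline{G})\ \ge\ 3n-3,\] and equality holds if and only if $G$ or $\overline{G}$ contains a clique of size $n-1$.
   Context: A clique partition of a graph $G$ is a family $\mathcal{C}$ of cliques (sets of pairwise adjacent vertices) of $G$ such that every edge of $G$ has both endpoints in exactly one member of $\mathcal{C}$. The sigma clique partition number $\operatorname{scp}(G)$ is the minimum of $\sum_{C\in\mathcal{C}}|C|$ over all clique partitions $\mathcal{C}$ of $G$. $\overline{G}$ denotes the complement of $G$. *)

theory Defs
  imports Main
begin

definition graph :: "'a set \<Rightarrow> 'a set set \<Rightarrow> bool" where
  "graph V E \<longleftrightarrow> finite V \<and> (\<forall>e\<in>E. e \<subseteq> V \<and> card e = 2)"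

definition all_pairs :: "'a set \<Rightarrow> 'a set set" where
  "all_pairs V = {e. e \<subseteq> V \<and> card e = 2}"

definition complement :: "'a set \<Rightarrow> 'a set set \<Rightarrow> 'a set set" where
  "complement V E = all_pairs V - E"

definition is_clique :: "'a set \<Rightarrow> 'a set set \<Rightarrow> 'a set \<Rightarrow> bool" where
  "is_clique V E C \<longleftrightarrow> C \<subseteq> V \<and> (\<forall>x\<in>C. \<forall>y\<in>C. x \<noteq> y \<longrightarrow> {x, y} \<in> E)"

definition clique_partition :: "'a set \<Rightarrow> 'a set set \<Rightarrow> 'a set set \<Rightarrow> bool" where
  "clique_partition V E \<C> \<longleftrightarrow> finite \<C> \<and> (\<forall>C\<in>\<C>. is_clique V E C) \<and>
     (\<forall>e\<in>E. \<exists>!C. C \<in> \<C> \<and> e \<subseteq> C)"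

definition scp :: "'a set \<Rightarrow> 'a set set \<Rightarrow> nat" where
  "scp V E = (LEAST s. \<exists>\<C>. clique_partition V E \<C> \<and> s = (\<Sum>C\<in>\<C>. card C))"

end

theory Submission
  imports Defs
begin

text \<open>
  The \<sigma>-size of a clique partition is the sum over all vertices of the number of cliques
  containing them. Take optimal partitions \<P> of G and \<Q> of its complement. A vertex in no
  clique of \<P> is isolated in G, hence adjacent to everything in the complement, and since G
  has an edge it must lie in at least two cliques of \<Q>; so every vertex lies in at least two
  cliques of \<P> \<union> \<Q>. Call it light if it lies in exactly two. Two light vertices that each
  lie in at most one clique of either partition, or two light vertices isolated in the same
  graph, force a clique on all but one vertex in G or its complement, and a vertex isolated in G
  cannot coexist with one isolated in the complement. So without such a clique at most two
  vertices are light, and the sum is at least 3n - 2.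

  If K is a clique on all vertices but w, let A and B be the neighbours and non-neighbours of
  w in K (B \<noteq> {} as G is not complete). The complement is the star from w to B, whose
  \<sigma> clique partition number is 2|B|, and {K} together with the edges wa (a \<in> A) shows
  scp G \<le> |K| + 2|A|. Conversely, if some clique D of a partition of G contains w and m \<ge> 2
  vertices of A, then every vertex of K outside D lies in at least m cliques avoiding w, one for
  each edge to D \<inter> A; otherwise all cliques through w are single edges. In both cases
  counting gives |K| + 2|A|, so the sum equals 3(n - 1).
\<close>

lemma card_doubleton_eq_2_iff: "card {x, y} = 2 \<longleftrightarrow> x \<noteq> y"
  by (cases "x = y") auto

lemma graph_finite: "graph V E \<Longrightarrow> finite V"
  unfolding graph_def by simp

lemma graph_edgeE:
  assumes "graph V E" "e \<in> E"
  obtains x y where "x \<in> V" "y \<in> V" "x \<noteq> y" "e = {x, y}"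
proof -
  have "e \<subseteq> V" "card e = 2" using assms unfolding graph_def by auto
  then show ?thesis using that by (auto simp: card_2_iff)
qed

lemma graph_subset_all_pairs: "graph V E \<Longrightarrow> E \<subseteq> all_pairs V"
  unfolding graph_def all_pairs_def by blast

lemma doubleton_in_complement_iff:
  "{x, y} \<in> complement V E \<longleftrightarrow> x \<in> V \<and> y \<in> V \<and> x \<noteq> y \<and> {x, y} \<notin> E"
  unfolding complement_def all_pairs_def by (simp add: card_doubleton_eq_2_iff)

lemma complement_complement: "graph V E \<Longrightarrow> complement V (complement V E) = E"
  using graph_subset_all_pairs unfolding complement_def by blast

lemma graph_complement: "graph V E \<Longrightarrow> graph V (complement V E)"
  unfolding complement_def all_pairs_def graph_def by blast

lemma complement_eq_empty_iff: "graph V E \<Longrightarrow> complement V E = {} \<longleftrightarrow> E = all_pairs V"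
  using graph_subset_all_pairs unfolding complement_def by blast

lemma complement_eq_all_pairs_iff: "graph V E \<Longrightarrow> complement V E = all_pairs V \<longleftrightarrow> E = {}"
  using graph_subset_all_pairs unfolding complement_def by blast

lemma graph_other_vertex:
  assumes "graph V E" "E \<noteq> {}" "v \<in> V"
  obtains u where "u \<in> V" "u \<noteq> v"
proof -
  obtain e where "e \<in> E" using assms(2) by blast
  then obtain x y where "x \<in> V" "y \<in> V" "x \<noteq> y" using assms(1) by (elim graph_edgeE)
  then show ?thesis using that by metis
qed

lemma card_ge_3_if_nontrivial:
  assumes g: "graph V E" and "E \<noteq> {}" "E \<noteq> all_pairs V"
  shows "3 \<le> card V"
proof (rule ccontr)
  assume "\<not> 3 \<le> card V"
  then have small: "card V \<le> 2" by simp
  obtain e where e: "e \<in> E" using assms(2) by blast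
  obtain e' where e': "e' \<in> complement V E" using assms(3) complement_eq_empty_iff[OF g] by blast
  have "e \<subseteq> V" "card e = 2" "e' \<subseteq> V" "card e' = 2"
    using e e' g unfolding graph_def complement_def all_pairs_def by auto
  then have "e = V" "e' = V"
    using small graph_finite[OF g] by (metis card_mono card_subset_eq le_antisym)+
  then show False using e e' unfolding complement_def by auto
qed

section \<open>Clique partitions and their \<sigma>-size\<close>

definition clique_count :: "'a set set \<Rightarrow> 'a \<Rightarrow> nat" where
  "clique_count \<C> v = card {C \<in> \<C>. v \<in> C}"

definition sigma_size :: "'a set set \<Rightarrow> nat" where
  "sigma_size \<C> = (\<Sum>C\<in>\<C>. card C)"

lemma clique_partition_finite: "clique_partition V E \<C> \<Longrightarrow> finite \<C>"
  unfolding clique_partition_def by auto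

lemma clique_partition_clique: "clique_partition V E \<C> \<Longrightarrow> C \<in> \<C> \<Longrightarrow> is_clique V E C"
  unfolding clique_partition_def by auto

lemma clique_partition_subset: "clique_partition V E \<C> \<Longrightarrow> C \<in> \<C> \<Longrightarrow> C \<subseteq> V"
  unfolding clique_partition_def is_clique_def by auto

lemma clique_partition_edge:
  "clique_partition V E \<C> \<Longrightarrow> C \<in> \<C> \<Longrightarrow> x \<in> C \<Longrightarrow> y \<in> C \<Longrightarrow> x \<noteq> y \<Longrightarrow> {x, y} \<in> E"
  unfolding clique_partition_def is_clique_def by auto

lemma clique_partition_coverE:
  assumes "clique_partition V E \<C>" "e \<in> E"
  obtains C where "C \<in> \<C>" "e \<subseteq> C"
  using assms unfolding clique_partition_def by blast

lemma clique_partition_unique: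
  "clique_partition V E \<C> \<Longrightarrow> e \<in> E \<Longrightarrow> C \<in> \<C> \<Longrightarrow> C' \<in> \<C> \<Longrightarrow> e \<subseteq> C \<Longrightarrow> e \<subseteq> C' \<Longrightarrow> C = C'"
  unfolding clique_partition_def by blast

lemma clique_partition_edges:
  assumes g: "graph V E"
  shows "clique_partition V E E"
proof -
  have "finite E"
    using g finite_subset[of E "Pow V"] unfolding graph_def by auto
  moreover have "is_clique V E e" if "e \<in> E" for e
    using g that by (elim graph_edgeE) (auto simp: is_clique_def insert_commute)
  moreover have "C = e" if "e \<in> E" "C \<in> E" "e \<subseteq> C" for e C
    using that g unfolding graph_def by (metis card_subset_eq finite_subset)
  ultimately show ?thesis
    unfolding clique_partition_def by blast
qed

lemma scp_le: "clique_partition V E \<C> \<Longrightarrow> scp V E \<le> sigma_size \<C>"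
  unfolding scp_def sigma_size_def by (rule Least_le) blast

lemma scp_attained:
  assumes "graph V E"
  obtains \<C> where "clique_partition V E \<C>" "scp V E = sigma_size \<C>"
proof -
  have "\<exists>s \<C>. clique_partition V E \<C> \<and> s = sigma_size \<C>"
    using clique_partition_edges[OF assms] by blast
  from LeastI_ex[OF this] show ?thesis
    using that unfolding scp_def sigma_size_def by blast
qed

lemma sigma_size_eq_sum_clique_count:
  assumes "finite V" "finite \<C>" "\<And>C. C \<in> \<C> \<Longrightarrow> C \<subseteq> V"
  shows "sigma_size \<C> = (\<Sum>v\<in>V. clique_count \<C> v)"
proof -
  have "sigma_size \<C> = (\<Sum>C\<in>\<C>. \<Sum>v\<in>V. if v \<in> C then 1 else 0)"
    unfolding sigma_size_def
  proof (rule sum.cong[OF refl])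
    fix C assume "C \<in> \<C>"
    then have "C = {v \<in> V. v \<in> C}" using assms(3) by auto
    then show "card C = (\<Sum>v\<in>V. if v \<in> C then 1 else 0)"
      using assms(1) by (simp add: sum.inter_filter[symmetric])
  qed
  also have "\<dots> = (\<Sum>v\<in>V. \<Sum>C\<in>\<C>. if v \<in> C then 1 else 0)"
    by (rule sum.swap)
  also have "\<dots> = (\<Sum>v\<in>V. clique_count \<C> v)"
    unfolding clique_count_def using assms(2) by (simp add: sum.inter_filter[symmetric])
  finally show ?thesis .
qed

lemma card_le_clique_count:
  "finite \<C> \<Longrightarrow> S \<subseteq> {C \<in> \<C>. v \<in> C} \<Longrightarrow> card S \<le> clique_count \<C> v"
  unfolding clique_count_def by (simp add: card_mono)

lemma clique_count_pos: "finite \<C> \<Longrightarrow> C \<in> \<C> \<Longrightarrow> v \<in> C \<Longrightarrow> 1 \<le> clique_count \<C> v"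
  using card_le_clique_count[of \<C> "{C}" v] by simp

lemma not_adjacent_if_clique_count_0:
  assumes "clique_partition V E \<C>" "clique_count \<C> v = 0"
  shows "{v, u} \<notin> E"
  using assms clique_count_pos[OF clique_partition_finite[OF assms(1)]]
  by (metis clique_partition_coverE insert_subset not_one_le_zero)

lemma clique_count_le_1_unique:
  assumes "finite \<C>" "clique_count \<C> v \<le> 1" "C \<in> \<C>" "C' \<in> \<C>" "v \<in> C" "v \<in> C'"
  shows "C = C'"
  using assms unfolding clique_count_def by (auto simp: card_le_Suc0_iff_eq)

lemma clique_count_le_2_unique:
  assumes "finite \<C>" "clique_count \<C> v \<le> 2" "C0 \<in> \<C>" "C \<in> \<C>" "C' \<in> \<C>"
    "v \<in> C0" "v \<in> C" "v \<in> C'" "C \<noteq> C0" "C' \<noteq> C0"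
  shows "C = C'"
proof (rule ccontr)
  assume "C \<noteq> C'"
  then have "card {C0, C, C'} = 3" using assms(9,10) by auto
  moreover have "card {C0, C, C'} \<le> clique_count \<C> v"
    using assms by (intro card_le_clique_count) auto
  ultimately show False using assms(2) by simp
qed

lemma graph_complete_if_spanning_clique:
  assumes g: "graph V E" and K: "is_clique V E K" "V \<subseteq> K"
  shows "E = all_pairs V"
proof (rule antisym[OF graph_subset_all_pairs[OF g]], rule subsetI)
  fix e assume "e \<in> all_pairs V"
  then obtain x y where "x \<in> V" "y \<in> V" "x \<noteq> y" "e = {x, y}"
    by (auto simp: all_pairs_def card_2_iff)
  then show "e \<in> E" using K unfolding is_clique_def by blast
qed

lemma not_adjacent_if_clique_count_le_1:
  assumes P: "clique_partition V E \<P>" and "clique_count \<P> v \<le> 1"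
    and K: "K \<in> \<P>" "v \<in> K" and "x \<notin> K"
  shows "{v, x} \<notin> E"
proof
  assume "{v, x} \<in> E"
  then obtain C where C: "C \<in> \<P>" "{v, x} \<subseteq> C" by (rule clique_partition_coverE[OF P])
  then have "C = K"
    using clique_count_le_1_unique[OF clique_partition_finite[OF P] assms(2) C(1) K(1)] K(2) by simp
  with C \<open>x \<notin> K\<close> show False by simp
qed

section \<open>Graphs without a clique on all but one vertex\<close>

definition has_near_spanning_clique :: "'a set \<Rightarrow> 'a set set \<Rightarrow> bool" where
  "has_near_spanning_clique V E \<longleftrightarrow> (\<exists>C. is_clique V E C \<and> card C = card V - 1)"

lemma near_spanning_cliqueI:
  assumes V: "finite V" and C: "is_clique V E C" and "V - C \<noteq> {}"
    and "\<And>x y. x \<in> V - C \<Longrightarrow> y \<in> V - C \<Longrightarrow> x = y"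
  shows "has_near_spanning_clique V E"
proof -
  have "C \<subseteq> V" using C unfolding is_clique_def by simp
  moreover have "card (V - C) = 1"
    using assms(3,4) by (metis card_1_singletonE is_singletonI' is_singleton_altdef)
  ultimately have "card C = card V - 1"
    using card_Diff_subset[OF finite_subset[OF _ V]] by fastforce
  then show ?thesis using C unfolding has_near_spanning_clique_def by blast
qed

lemma clique_count_ge_2_if_isolated:
  assumes g: "graph V E" and "E \<noteq> {}" and Q: "clique_partition V (complement V E) \<Q>"
    and v: "v \<in> V" and isolated: "\<And>u. {v, u} \<notin> E"
  shows "2 \<le> clique_count \<Q> v"
proof (rule ccontr)
  assume "\<not> 2 \<le> clique_count \<Q> v"
  then have le1: "clique_count \<Q> v \<le> 1" by simp
  have co_edge: "{v, x} \<in> complement V E" if "x \<in> V" "x \<noteq> v" for x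
    using that v isolated by (simp add: doubleton_in_complement_iff)
  obtain u where u: "u \<in> V" "u \<noteq> v" using graph_other_vertex[OF g \<open>E \<noteq> {}\<close> v] .
  obtain C where C: "C \<in> \<Q>" "{v, u} \<subseteq> C"
    using clique_partition_coverE[OF Q co_edge[OF u]] .
  have "V \<subseteq> C"
    using not_adjacent_if_clique_count_le_1[OF Q le1 C(1)] co_edge C(2) by blast
  then have "complement V E = all_pairs V"
    using graph_complete_if_spanning_clique[OF graph_complement[OF g]]
      clique_partition_clique[OF Q C(1)] by blast
  then show False using \<open>E \<noteq> {}\<close> complement_eq_all_pairs_iff[OF g] by simp
qed

lemma clique_count_sum_ge_2:
  assumes g: "graph V E" and "E \<noteq> {}" "E \<noteq> all_pairs V"
    and P: "clique_partition V E \<P>" and Q: "clique_partition V (complement V E) \<Q>"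
    and v: "v \<in> V"
  shows "2 \<le> clique_count \<P> v + clique_count \<Q> v"
proof -
  have "clique_partition V (complement V (complement V E)) \<P>"
    using P complement_complement[OF g] by simp
  moreover have "complement V E \<noteq> {}" using assms(3) complement_eq_empty_iff[OF g] by simp
  ultimately have "clique_count \<Q> v = 0 \<Longrightarrow> 2 \<le> clique_count \<P> v"
    using clique_count_ge_2_if_isolated[OF graph_complement[OF g] _ _ v]
      not_adjacent_if_clique_count_0[OF Q] by blast
  moreover have "clique_count \<P> v = 0 \<Longrightarrow> 2 \<le> clique_count \<Q> v"
    using clique_count_ge_2_if_isolated[OF g \<open>E \<noteq> {}\<close> Q v]
      not_adjacent_if_clique_count_0[OF P] by blast
  ultimately show ?thesis by linarith
qed

lemma near_spanning_clique_if_light_edge: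
  assumes g: "graph V E" and "E \<noteq> all_pairs V"
    and P: "clique_partition V E \<P>" and Q: "clique_partition V (complement V E) \<Q>"
    and uv: "{u, v} \<in> E"
    and light: "\<And>x. x \<in> {u, v} \<Longrightarrow> clique_count \<P> x \<le> 1 \<and> clique_count \<Q> x \<le> 1"
  shows "has_near_spanning_clique V E"
proof -
  obtain K where K: "K \<in> \<P>" "{u, v} \<subseteq> K" using clique_partition_coverE[OF P uv] .
  have uvV: "u \<in> V" "v \<in> V" "u \<noteq> v"
    using g uv unfolding graph_def by (auto simp: card_doubleton_eq_2_iff)
  have co_edge: "{z, x} \<in> complement V E" if "x \<in> V - K" "z \<in> {u, v}" for x z
    using not_adjacent_if_clique_count_le_1[OF P _ K(1), of z x] light[OF that(2)] that uvV K(2)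
    by (auto simp: doubleton_in_complement_iff)
  show ?thesis
  proof (rule near_spanning_cliqueI[OF graph_finite[OF g] clique_partition_clique[OF P K(1)]])
    show "V - K \<noteq> {}"
      using graph_complete_if_spanning_clique[OF g clique_partition_clique[OF P K(1)]] assms(2)
      by blast
    fix x y assume xy: "x \<in> V - K" "y \<in> V - K"
    show "x = y"
    proof (rule ccontr)
      assume "x \<noteq> y"
      \<comment> \<open>the only clique of \<Q> through z contains both x and y\<close>
      have common: "\<exists>D\<in>\<Q>. {z, x, y} \<subseteq> D" if z: "z \<in> {u, v}" for z
      proof -
        obtain D1 where D1: "D1 \<in> \<Q>" "{z, x} \<subseteq> D1"
          using clique_partition_coverE[OF Q co_edge[OF xy(1) z]] .
        obtain D2 where D2: "D2 \<in> \<Q>" "{z, y} \<subseteq> D2"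
          using clique_partition_coverE[OF Q co_edge[OF xy(2) z]] .
        have "D1 = D2"
          using clique_count_le_1_unique[OF clique_partition_finite[OF Q]
              conjunct2[OF light[OF z]] D1(1) D2(1)] D1 D2 by simp
        then show ?thesis using D1 D2 by auto
      qed
      obtain Du where Du: "Du \<in> \<Q>" "{u, x, y} \<subseteq> Du" using common[of u] by blast
      obtain Dv where Dv: "Dv \<in> \<Q>" "{v, x, y} \<subseteq> Dv" using common[of v] by blast
      have "{x, y} \<in> complement V E"
        using clique_partition_edge[OF Q Du(1)] Du \<open>x \<noteq> y\<close> by auto
      then have "Du = Dv" using clique_partition_unique[OF Q _ Du(1) Dv(1)] Du Dv by simp
      then have "{u, v} \<in> complement V E"
        using clique_partition_edge[OF Q Du(1)] Du Dv uvV by auto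
      then show False using uv by (simp add: doubleton_in_complement_iff)
    qed
  qed
qed

lemma near_spanning_clique_if_two_isolated:
  assumes g: "graph V E" and "E \<noteq> {}" and Q: "clique_partition V (complement V E) \<Q>"
    and uv: "u \<in> V" "v \<in> V" "u \<noteq> v"
    and isolated: "\<And>x z. x \<in> {u, v} \<Longrightarrow> {x, z} \<notin> E"
    and light: "\<And>x. x \<in> {u, v} \<Longrightarrow> clique_count \<Q> x \<le> 2"
  shows "has_near_spanning_clique V (complement V E)"
proof -
  have finQ: "finite \<Q>" using clique_partition_finite[OF Q] .
  have co_edge: "{x, z} \<in> complement V E" if "x \<in> {u, v}" "z \<in> V" "z \<noteq> x" for x z
    using isolated[OF that(1), of z] that uv by (auto simp: doubleton_in_complement_iff)
  have uv_co: "{u, v} \<in> complement V E" using co_edge uv by simp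
  obtain C where C: "C \<in> \<Q>" "{u, v} \<subseteq> C" using clique_partition_coverE[OF Q uv_co] .
  show ?thesis
  proof (rule near_spanning_cliqueI[OF graph_finite[OF g] clique_partition_clique[OF Q C(1)]])
    show "V - C \<noteq> {}"
      using graph_complete_if_spanning_clique[OF graph_complement[OF g] clique_partition_clique[OF Q C(1)]]
        \<open>E \<noteq> {}\<close> complement_eq_all_pairs_iff[OF g] by blast
    fix x y assume xy: "x \<in> V - C" "y \<in> V - C"
    show "x = y"
    proof (rule ccontr)
      assume "x \<noteq> y"
      \<comment> \<open>besides C, each of u, v lies in one more clique of \<Q>, which then contains x and y\<close>
      have other: "\<exists>D\<in>\<Q>. D \<noteq> C \<and> {z, x, y} \<subseteq> D" if z: "z \<in> {u, v}" for z
      proof -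
        have "z \<in> C" using z C by auto
        have "x \<noteq> z" "y \<noteq> z" using xy \<open>z \<in> C\<close> by auto
        obtain D1 where D1: "D1 \<in> \<Q>" "{z, x} \<subseteq> D1"
          using clique_partition_coverE[OF Q co_edge[OF z _ \<open>x \<noteq> z\<close>]] xy by blast
        obtain D2 where D2: "D2 \<in> \<Q>" "{z, y} \<subseteq> D2"
          using clique_partition_coverE[OF Q co_edge[OF z _ \<open>y \<noteq> z\<close>]] xy by blast
        have "D1 \<noteq> C" "D2 \<noteq> C" using D1 D2 xy by auto
        then have "D1 = D2"
          using clique_count_le_2_unique[OF finQ light[OF z] C(1) D1(1) D2(1)] \<open>z \<in> C\<close> D1 D2
          by simp
        then show ?thesis using D1 D2 \<open>D1 \<noteq> C\<close> by auto
      qed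
      obtain Du where Du: "Du \<in> \<Q>" "Du \<noteq> C" "{u, x, y} \<subseteq> Du" using other[of u] by blast
      obtain Dv where Dv: "Dv \<in> \<Q>" "Dv \<noteq> C" "{v, x, y} \<subseteq> Dv" using other[of v] by blast
      have "{x, y} \<in> complement V E"
        using clique_partition_edge[OF Q Du(1)] Du \<open>x \<noteq> y\<close> by auto
      then have "Du = Dv" using clique_partition_unique[OF Q _ Du(1) Dv(1)] Du Dv by simp
      then have "Du = C" using clique_partition_unique[OF Q uv_co Du(1) C(1)] Du Dv C by simp
      then show False using Du by simp
    qed
  qed
qed

lemma balanced_light_vertices_eq:
  assumes g: "graph V E" and ne: "E \<noteq> {}" and na: "E \<noteq> all_pairs V"
    and P: "clique_partition V E \<P>" and Q: "clique_partition V (complement V E) \<Q>"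
    and noE: "\<not> has_near_spanning_clique V E"
    and noE': "\<not> has_near_spanning_clique V (complement V E)"
    and xy: "x \<in> V" "y \<in> V"
    and light: "\<And>z. z \<in> {x, y} \<Longrightarrow> clique_count \<P> z \<le> 1 \<and> clique_count \<Q> z \<le> 1"
  shows "x = y"
proof (rule ccontr)
  assume "x \<noteq> y"
  show False
  proof (cases "{x, y} \<in> E")
    case True
    then show False using near_spanning_clique_if_light_edge[OF g na P Q True] light noE by blast
  next
    case False
    then have "{x, y} \<in> complement V E"
      using xy \<open>x \<noteq> y\<close> by (simp add: doubleton_in_complement_iff)
    moreover have "clique_partition V (complement V (complement V E)) \<P>"
      using P complement_complement[OF g] by simp
    moreover have "complement V E \<noteq> all_pairs V"
      using ne complement_eq_all_pairs_iff[OF g] by simp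
    ultimately show False
      using near_spanning_clique_if_light_edge[OF graph_complement[OF g] _ Q] light noE' by blast
  qed
qed

lemma lopsided_light_vertices_eq:
  assumes g: "graph V E" and ne: "E \<noteq> {}" and na: "E \<noteq> all_pairs V"
    and P: "clique_partition V E \<P>" and Q: "clique_partition V (complement V E) \<Q>"
    and noE: "\<not> has_near_spanning_clique V E"
    and noE': "\<not> has_near_spanning_clique V (complement V E)"
    and xy: "x \<in> V" "y \<in> V"
    and lopsided: "\<And>z. z \<in> {x, y} \<Longrightarrow> clique_count \<P> z = 0 \<and> clique_count \<Q> z \<le> 2 \<or>
                                          clique_count \<Q> z = 0 \<and> clique_count \<P> z \<le> 2"
  shows "x = y"
proof (rule ccontr)
  assume "x \<noteq> y"
  have isoE: "{a, z} \<notin> E" if "clique_count \<P> a = 0" for a z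
    using not_adjacent_if_clique_count_0[OF P that] .
  have isoE': "{a, z} \<notin> complement V E" if "clique_count \<Q> a = 0" for a z
    using not_adjacent_if_clique_count_0[OF Q that] .
  consider "clique_count \<P> x = 0" "clique_count \<P> y = 0"
    | "clique_count \<Q> x = 0" "clique_count \<Q> y = 0"
    | "clique_count \<P> x = 0" "clique_count \<Q> y = 0"
    | "clique_count \<Q> x = 0" "clique_count \<P> y = 0"
    using lopsided[of x] lopsided[of y] by auto
  then show False
  proof cases
    case 1
    then have "has_near_spanning_clique V (complement V E)"
      using 1 xy lopsided[of x] lopsided[of y] isoE \<open>x \<noteq> y\<close>
      by (intro near_spanning_clique_if_two_isolated[OF g ne Q]) auto
    then show False using noE' by blast
  next
    case 2
    have "clique_partition V (complement V (complement V E)) \<P>"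
      using P complement_complement[OF g] by simp
    then have "has_near_spanning_clique V (complement V (complement V E))"
      using 2 xy lopsided[of x] lopsided[of y] isoE' \<open>x \<noteq> y\<close> complement_eq_empty_iff[OF g] na
      by (intro near_spanning_clique_if_two_isolated[OF graph_complement[OF g]]) auto
    then show False using noE complement_complement[OF g] by simp
  next
    case 3
    then show False using isoE[of x y] isoE'[of y x] xy \<open>x \<noteq> y\<close>
      by (simp add: doubleton_in_complement_iff insert_commute)
  next
    case 4
    then show False using isoE[of y x] isoE'[of x y] xy \<open>x \<noteq> y\<close>
      by (simp add: doubleton_in_complement_iff insert_commute)
  qed
qed

lemma card_light_vertices_le_2:
  assumes g: "graph V E" and "E \<noteq> {}" "E \<noteq> all_pairs V"
    and P: "clique_partition V E \<P>" and Q: "clique_partition V (complement V E) \<Q>"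
    and "\<not> has_near_spanning_clique V E" "\<not> has_near_spanning_clique V (complement V E)"
  shows "card {v \<in> V. clique_count \<P> v + clique_count \<Q> v \<le> 2} \<le> 2"
proof -
  have finV: "finite V" using graph_finite[OF g] .
  define balanced where
    "balanced = {v \<in> V. clique_count \<P> v \<le> 1 \<and> clique_count \<Q> v \<le> 1}"
  define lopsided where
    "lopsided = {v \<in> V. clique_count \<P> v = 0 \<and> clique_count \<Q> v \<le> 2 \<or>
                        clique_count \<Q> v = 0 \<and> clique_count \<P> v \<le> 2}"
  have "card balanced \<le> 1"
    using balanced_light_vertices_eq[OF assms] finV unfolding balanced_def
    by (auto simp: card_le_Suc0_iff_eq)
  moreover have "card lopsided \<le> 1"
    using lopsided_light_vertices_eq[OF assms] finV unfolding lopsided_def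
    by (auto simp: card_le_Suc0_iff_eq)
  moreover have "{v \<in> V. clique_count \<P> v + clique_count \<Q> v \<le> 2} \<subseteq> balanced \<union> lopsided"
    unfolding balanced_def lopsided_def by auto
  then have "card {v \<in> V. clique_count \<P> v + clique_count \<Q> v \<le> 2} \<le> card (balanced \<union> lopsided)"
    using finV unfolding balanced_def lopsided_def by (intro card_mono) auto
  moreover have "card (balanced \<union> lopsided) \<le> card balanced + card lopsided"
    by (rule card_Un_le)
  ultimately show ?thesis by linarith
qed

lemma scp_sum_ge_if_no_near_spanning_clique:
  assumes g: "graph V E" and ne: "E \<noteq> {}" and na: "E \<noteq> all_pairs V"
    and noE: "\<not> has_near_spanning_clique V E"
    and noE': "\<not> has_near_spanning_clique V (complement V E)"
  shows "3 * card V - 2 \<le> scp V E + scp V (complement V E)"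
proof -
  obtain \<P> where P: "clique_partition V E \<P>" "scp V E = sigma_size \<P>"
    using scp_attained[OF g] .
  obtain \<Q> where Q: "clique_partition V (complement V E) \<Q>" "scp V (complement V E) = sigma_size \<Q>"
    using scp_attained[OF graph_complement[OF g]] .
  have finV: "finite V" using graph_finite[OF g] .
  define t where "t v = clique_count \<P> v + clique_count \<Q> v" for v
  define light where "light = {v \<in> V. t v \<le> 2}"
  have "card light \<le> 2"
    using card_light_vertices_le_2[OF g ne na P(1) Q(1) noE noE'] unfolding light_def t_def .
  have "3 * card V = (\<Sum>v\<in>V. 3::nat)" by simp
  also have "\<dots> \<le> (\<Sum>v\<in>V. t v + (if v \<in> light then 1 else 0))"
    using clique_count_sum_ge_2[OF g ne na P(1) Q(1)]
    by (intro sum_mono) (fastforce simp: light_def t_def)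
  also have "\<dots> = (\<Sum>v\<in>V. t v) + card light"
    using finV unfolding light_def by (simp add: sum.distrib sum.inter_filter[symmetric])
  also have "(\<Sum>v\<in>V. t v) = sigma_size \<P> + sigma_size \<Q>"
    using sigma_size_eq_sum_clique_count[OF finV clique_partition_finite clique_partition_subset]
      P(1) Q(1) unfolding t_def by (simp add: sum.distrib)
  finally show ?thesis using \<open>card light \<le> 2\<close> P(2) Q(2) by linarith
qed

section \<open>Graphs with a clique on all but one vertex\<close>

lemma inj_on_doubleton: "w \<notin> S \<Longrightarrow> inj_on (\<lambda>x. {w, x}) S"
  unfolding inj_on_def by (auto simp: doubleton_eq_iff)

lemma sigma_size_doubletons:
  assumes "w \<notin> S" "finite S"
  shows "sigma_size ((\<lambda>x. {w, x}) ` S) = 2 * card S"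
proof -
  have "card {w, x} = 2" if "x \<in> S" for x
    using that assms(1) by (auto simp: card_doubleton_eq_2_iff)
  then show ?thesis
    unfolding sigma_size_def using assms by (simp add: sum.reindex[OF inj_on_doubleton])
qed

locale clique_plus_vertex =
  fixes V :: "'a set" and E :: "'a set set" and K :: "'a set" and w :: 'a
  assumes graph: "graph V E" and nonempty: "E \<noteq> {}" and not_complete: "E \<noteq> all_pairs V"
    and clique: "is_clique V E K" and V_eq: "V = insert w K" and w_notin: "w \<notin> K"
begin

definition nbrs :: "'a set" where
  "nbrs = {x \<in> K. {w, x} \<in> E}"

definition non_nbrs :: "'a set" where
  "non_nbrs = K - nbrs"

lemma finite_K: "finite K"
  using graph_finite[OF graph] V_eq by simp

lemma finite_nbrs: "finite nbrs" and finite_non_nbrs: "finite non_nbrs"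
  using finite_K unfolding nbrs_def non_nbrs_def by auto

lemma K_eq: "K = nbrs \<union> non_nbrs" and nbrs_disjoint: "nbrs \<inter> non_nbrs = {}"
  unfolding nbrs_def non_nbrs_def by auto

lemma nbrs_subset: "nbrs \<subseteq> K" and non_nbrs_subset: "non_nbrs \<subseteq> K"
  unfolding nbrs_def non_nbrs_def by auto

lemma card_K: "card K = card nbrs + card non_nbrs"
proof -
  have "card (nbrs \<union> non_nbrs) = card nbrs + card non_nbrs"
    using finite_nbrs finite_non_nbrs nbrs_disjoint by (rule card_Un_disjoint)
  then show ?thesis by (simp only: K_eq[symmetric])
qed

lemma w_notin_nbrs: "w \<notin> nbrs" and w_notin_non_nbrs: "w \<notin> non_nbrs"
  using w_notin nbrs_subset non_nbrs_subset by auto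

lemma clique_edge: "x \<in> K \<Longrightarrow> y \<in> K \<Longrightarrow> x \<noteq> y \<Longrightarrow> {x, y} \<in> E"
  using clique unfolding is_clique_def by blast

lemma nbr_edge: "x \<in> nbrs \<Longrightarrow> {w, x} \<in> E"
  unfolding nbrs_def by simp

lemma complement_eq_star: "complement V E = (\<lambda>y. {w, y}) ` non_nbrs"
proof (intro equalityI subsetI)
  fix e assume e: "e \<in> complement V E"
  then obtain x y where xy: "x \<in> V" "y \<in> V" "x \<noteq> y" "e = {x, y}"
    using graph_complement[OF graph] by (elim graph_edgeE)
  have "{x, y} \<notin> E" using e xy(4) unfolding complement_def by simp
  then have "x = w \<and> y \<in> non_nbrs \<or> y = w \<and> x \<in> non_nbrs"
    using xy clique_edge V_eq unfolding non_nbrs_def nbrs_def by (auto simp: insert_commute)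
  then show "e \<in> (\<lambda>y. {w, y}) ` non_nbrs" using xy(4) by (auto simp: insert_commute)
next
  fix e assume "e \<in> (\<lambda>y. {w, y}) ` non_nbrs"
  then obtain y where "y \<in> non_nbrs" "e = {w, y}" by blast
  then show "e \<in> complement V E"
    using V_eq w_notin unfolding non_nbrs_def nbrs_def
    by (auto simp: doubleton_in_complement_iff)
qed

lemma non_nbrs_nonempty: "non_nbrs \<noteq> {}"
  using complement_eq_star not_complete complement_eq_empty_iff[OF graph] by auto

lemma card_K_ge_2: "2 \<le> card K"
  using card_ge_3_if_nontrivial[OF graph nonempty not_complete] V_eq w_notin finite_K by simp

lemma edge_cases:
  assumes "e \<in> E"
  obtains "e \<subseteq> K" | x where "x \<in> nbrs" "e = {w, x}"
proof -
  obtain x y where xy: "x \<in> V" "y \<in> V" "x \<noteq> y" "e = {x, y}"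
    using graph assms by (elim graph_edgeE)
  consider "x = w" | "y = w" | "x \<in> K" "y \<in> K" using xy V_eq by blast
  then show thesis
  proof cases
    case 1
    then show thesis using that(2)[of y] xy assms V_eq unfolding nbrs_def by auto
  next
    case 2
    then show thesis using that(2)[of x] xy assms V_eq unfolding nbrs_def by (auto simp: insert_commute)
  qed (use that(1) xy in auto)
qed

lemma clique_partition_star: "clique_partition V E (insert K ((\<lambda>x. {w, x}) ` nbrs))"
  unfolding clique_partition_def
proof (intro conjI ballI)
  show "finite (insert K ((\<lambda>x. {w, x}) ` nbrs))" using finite_nbrs by simp
  fix C assume "C \<in> insert K ((\<lambda>x. {w, x}) ` nbrs)"
  then show "is_clique V E C"
    using clique nbr_edge nbrs_subset V_eq unfolding is_clique_def by (auto simp: insert_commute)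
next
  fix e assume e: "e \<in> E"
  then have two: "card e = 2" using graph unfolding graph_def by blast
  show "\<exists>!C. C \<in> insert K ((\<lambda>x. {w, x}) ` nbrs) \<and> e \<subseteq> C"
    using e
  proof (cases rule: edge_cases)
    case 1
    have "\<not> e \<subseteq> {w, x}" if "x \<in> nbrs" for x
    proof
      assume "e \<subseteq> {w, x}"
      with 1 w_notin have "e \<subseteq> {x}" by blast
      then have "card e \<le> card {x}" by (intro card_mono) simp_all
      then show False using two by simp
    qed
    then show ?thesis using 1 by blast
  next
    case (2 x)
    then have "x \<noteq> w" using w_notin_nbrs by blast
    then have "C = {w, x}" if "C \<in> insert K ((\<lambda>x. {w, x}) ` nbrs)" "e \<subseteq> C" for C
      using that 2 w_notin by (auto simp: doubleton_eq_iff)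
    then show ?thesis using 2 by blast
  qed
qed

lemma scp_le_star: "scp V E \<le> card K + 2 * card nbrs"
proof -
  have "K \<notin> (\<lambda>x. {w, x}) ` nbrs" using w_notin by auto
  then have "sigma_size (insert K ((\<lambda>x. {w, x}) ` nbrs)) = card K + 2 * card nbrs"
    using sigma_size_doubletons[OF w_notin_nbrs finite_nbrs] finite_nbrs
    unfolding sigma_size_def by simp
  then show ?thesis using scp_le[OF clique_partition_star] by simp
qed

lemma scp_complement: "scp V (complement V E) = 2 * card non_nbrs"
proof (rule antisym)
  show "scp V (complement V E) \<le> 2 * card non_nbrs"
    using scp_le[OF clique_partition_edges[OF graph_complement[OF graph]]]
    unfolding complement_eq_star sigma_size_doubletons[OF w_notin_non_nbrs finite_non_nbrs] .
next
  obtain \<Q> where Q: "clique_partition V (complement V E) \<Q>" "scp V (complement V E) = sigma_size \<Q>"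
    using scp_attained[OF graph_complement[OF graph]] .
  \<comment> \<open>the complement is a star, so it has no triangles and every clique of \<Q> is a single edge\<close>
  have "complement V E \<subseteq> \<Q>"
  proof
    fix e assume e: "e \<in> complement V E"
    obtain D where D: "D \<in> \<Q>" "e \<subseteq> D" using clique_partition_coverE[OF Q(1) e] .
    obtain y where y: "y \<in> non_nbrs" "e = {w, y}" using e complement_eq_star by auto
    have "D \<subseteq> e"
    proof
      fix z assume z: "z \<in> D"
      show "z \<in> e"
      proof (rule ccontr)
        assume "z \<notin> e"
        then have "{y, z} \<in> complement V E"
          using clique_partition_edge[OF Q(1) D(1)] D y z by auto
        then show False using \<open>z \<notin> e\<close> y w_notin_non_nbrs
          unfolding complement_eq_star by (auto simp: doubleton_eq_iff)
      qed
    qed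
    then show "e \<in> \<Q>" using D by auto
  qed
  then have "sigma_size (complement V E) \<le> sigma_size \<Q>"
    unfolding sigma_size_def using clique_partition_finite[OF Q(1)] by (intro sum_mono2) auto
  then show "2 * card non_nbrs \<le> scp V (complement V E)"
    using Q(2) unfolding complement_eq_star sigma_size_doubletons[OF w_notin_non_nbrs finite_non_nbrs]
    by simp
qed

lemma clique_through_w_subset:
  assumes P: "clique_partition V E \<P>" and C: "C \<in> \<P>" "w \<in> C"
  shows "C \<subseteq> insert w nbrs"
proof
  fix z assume z: "z \<in> C"
  show "z \<in> insert w nbrs"
  proof (cases "z = w")
    case False
    then have "z \<in> K" using clique_partition_subset[OF P C(1)] z V_eq by auto
    moreover have "{w, z} \<in> E" using clique_partition_edge[OF P C(1) C(2) z] False by auto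
    ultimately show ?thesis unfolding nbrs_def by simp
  qed simp
qed

lemma clique_count_pos_K:
  assumes P: "clique_partition V E \<P>" and y: "y \<in> K"
  shows "1 \<le> clique_count \<P> y"
proof -
  have "\<not> card K \<le> Suc 0" using card_K_ge_2 by simp
  then obtain z where "z \<in> K" "z \<noteq> y"
    using y finite_K by (auto simp: card_le_Suc0_iff_eq)
  then have "{y, z} \<in> E" using clique_edge y by blast
  then obtain C where "C \<in> \<P>" "{y, z} \<subseteq> C" by (rule clique_partition_coverE[OF P])
  then show ?thesis using clique_count_pos[OF clique_partition_finite[OF P]] by blast
qed

lemma clique_count_nbr_ge_2:
  assumes P: "clique_partition V E \<P>" and D: "D \<in> \<P>" "w \<in> D" and x: "x \<in> nbrs" "x \<in> D"
  shows "2 \<le> clique_count \<P> x"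
proof -
  obtain y where y: "y \<in> non_nbrs" using non_nbrs_nonempty by blast
  then have "x \<noteq> y" "x \<in> K" "y \<in> K" using x nbrs_disjoint nbrs_subset non_nbrs_subset by auto
  then obtain C where C: "C \<in> \<P>" "{x, y} \<subseteq> C"
    using clique_partition_coverE[OF P clique_edge[of x y]] by blast
  have "y \<notin> D"
    using clique_through_w_subset[OF P D] y w_notin_non_nbrs nbrs_disjoint by auto
  then have "card {D, C} = 2" using C by (cases "D = C") auto
  moreover have "card {D, C} \<le> clique_count \<P> x"
    using C D x by (intro card_le_clique_count[OF clique_partition_finite[OF P]]) auto
  ultimately show ?thesis by simp
qed

lemma card_cliques_avoiding_w_ge:
  assumes P: "clique_partition V E \<P>" and D: "D \<in> \<P>" "w \<in> D" and z: "z \<in> K" "z \<notin> D"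
  shows "card (D \<inter> nbrs) \<le> card {C \<in> \<P>. z \<in> C \<and> w \<notin> C}"
proof -
  have "\<forall>d \<in> D \<inter> nbrs. \<exists>C. C \<in> \<P> \<and> {z, d} \<subseteq> C"
  proof
    fix d assume d: "d \<in> D \<inter> nbrs"
    then have "{z, d} \<in> E" using clique_edge z nbrs_subset by blast
    then obtain C where "C \<in> \<P>" "{z, d} \<subseteq> C" by (rule clique_partition_coverE[OF P])
    then show "\<exists>C. C \<in> \<P> \<and> {z, d} \<subseteq> C" by blast
  qed
  then obtain f where f: "\<And>d. d \<in> D \<inter> nbrs \<Longrightarrow> f d \<in> \<P> \<and> {z, d} \<subseteq> f d"
    using bchoice[of "D \<inter> nbrs" "\<lambda>d C. C \<in> \<P> \<and> {z, d} \<subseteq> C"] by blast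
  have f_ne_D: "f d \<noteq> D" if "d \<in> D \<inter> nbrs" for d
    using f[OF that] z by auto
  \<comment> \<open>so f d contains no edge of D: neither w nor a second vertex of D \<inter> nbrs\<close>
  have w_notin_f: "w \<notin> f d" if d: "d \<in> D \<inter> nbrs" for d
  proof
    assume "w \<in> f d"
    then have "{w, d} \<subseteq> f d" "{w, d} \<subseteq> D" using f[OF d] d D by auto
    then show False
      using clique_partition_unique[OF P nbr_edge _ D(1)] f[OF d] f_ne_D[OF d] d by blast
  qed
  have "inj_on f (D \<inter> nbrs)"
  proof (rule inj_onI)
    fix d d' assume d: "d \<in> D \<inter> nbrs" and d': "d' \<in> D \<inter> nbrs" and eq: "f d = f d'"
    show "d = d'"
    proof (rule ccontr)
      assume "d \<noteq> d'"
      then have "{d, d'} \<in> E" using clique_edge d d' nbrs_subset by blast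
      moreover have "{d, d'} \<subseteq> f d" "{d, d'} \<subseteq> D" using f[OF d] f[OF d'] eq d d' by auto
      ultimately show False
        using clique_partition_unique[OF P _ _ D(1)] f[OF d] f_ne_D[OF d] by blast
    qed
  qed
  moreover have "f ` (D \<inter> nbrs) \<subseteq> {C \<in> \<P>. z \<in> C \<and> w \<notin> C}"
    using f w_notin_f by auto
  then have "card (f ` (D \<inter> nbrs)) \<le> card {C \<in> \<P>. z \<in> C \<and> w \<notin> C}"
    using clique_partition_finite[OF P] by (intro card_mono) auto
  ultimately show ?thesis by (simp add: card_image)
qed

lemma sigma_size_split:
  assumes P: "clique_partition V E \<P>"
  shows "sigma_size \<P> = clique_count \<P> w + (\<Sum>v\<in>nbrs. clique_count \<P> v)
                          + (\<Sum>v\<in>non_nbrs. clique_count \<P> v)"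
proof -
  have "V = insert w (nbrs \<union> non_nbrs)" by (simp only: V_eq K_eq[symmetric])
  moreover have "w \<notin> nbrs \<union> non_nbrs" using w_notin_nbrs w_notin_non_nbrs by simp
  ultimately show ?thesis
    using sigma_size_eq_sum_clique_count[OF graph_finite[OF graph] clique_partition_finite[OF P]
        clique_partition_subset[OF P]] finite_nbrs finite_non_nbrs nbrs_disjoint
    by (simp add: sum.union_disjoint)
qed

lemma clique_count_non_nbr_ge:
  assumes P: "clique_partition V E \<P>" and D: "D \<in> \<P>" "w \<in> D" and y: "y \<in> non_nbrs"
  shows "card (D \<inter> nbrs) \<le> clique_count \<P> y"
proof -
  have "y \<notin> D"
    using clique_through_w_subset[OF P D] y w_notin_non_nbrs nbrs_disjoint by auto
  then have "card (D \<inter> nbrs) \<le> card {C \<in> \<P>. y \<in> C \<and> w \<notin> C}"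
    using card_cliques_avoiding_w_ge[OF P D] y non_nbrs_subset by blast
  also have "\<dots> \<le> clique_count \<P> y"
    by (rule card_le_clique_count[OF clique_partition_finite[OF P]]) auto
  finally show ?thesis .
qed

lemma clique_count_nbr_outside_ge:
  assumes P: "clique_partition V E \<P>" and D: "D \<in> \<P>" "w \<in> D" and z: "z \<in> nbrs" "z \<notin> D"
  shows "card (D \<inter> nbrs) + 1 \<le> clique_count \<P> z"
proof -
  let ?S = "{C \<in> \<P>. z \<in> C \<and> w \<notin> C}"
  have finP: "finite \<P>" using clique_partition_finite[OF P] .
  obtain C where C: "C \<in> \<P>" "{w, z} \<subseteq> C"
    using clique_partition_coverE[OF P nbr_edge[OF z(1)]] .
  have "card (D \<inter> nbrs) + 1 \<le> card ?S + 1"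
    using card_cliques_avoiding_w_ge[OF P D] z nbrs_subset by auto
  also have "\<dots> = card (insert C ?S)" using C finP by simp
  also have "\<dots> \<le> clique_count \<P> z"
    using C by (intro card_le_clique_count[OF finP]) auto
  finally show ?thesis .
qed

lemma sigma_size_ge_if_large_clique_through_w:
  assumes P: "clique_partition V E \<P>" and D: "D \<in> \<P>" "w \<in> D" and M: "2 \<le> card (D \<inter> nbrs)"
  shows "card K + 2 * card nbrs \<le> sigma_size \<P>"
proof -
  let ?c = "clique_count \<P>"
  define m where "m = card (D \<inter> nbrs)"
  define r where "r = card (nbrs - D)"
  define b where "b = card non_nbrs"
  have sum_non_nbrs: "b * m \<le> (\<Sum>v\<in>non_nbrs. ?c v)"
    using clique_count_non_nbr_ge[OF P D] sum_bounded_below[of non_nbrs m ?c]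
    unfolding b_def m_def by simp
  have sum_outside: "r * (m + 1) \<le> (\<Sum>v\<in>nbrs - D. ?c v)"
    using clique_count_nbr_outside_ge[OF P D] sum_bounded_below[of "nbrs - D" "m + 1" ?c]
    unfolding r_def m_def by simp
  have sum_inside: "m * 2 \<le> (\<Sum>v\<in>nbrs \<inter> D. ?c v)"
    using clique_count_nbr_ge_2[OF P D] sum_bounded_below[of "nbrs \<inter> D" 2 ?c]
    unfolding m_def by (simp add: Int_commute)
  have count_w: "1 \<le> ?c w" using clique_count_pos[OF clique_partition_finite[OF P] D] .
  have "card nbrs = m + r"
    unfolding m_def r_def using card_Int_Diff[OF finite_nbrs, of D] by (simp add: Int_commute)
  have "1 \<le> b" unfolding b_def
    using non_nbrs_nonempty finite_non_nbrs by (simp add: Suc_le_eq card_gt_0_iff)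
  obtain m' b' where m': "m = m' + 2" and b': "b = b' + 1"
    using M \<open>1 \<le> b\<close> unfolding m_def by (metis le_add_diff_inverse2)
  have "card K + 2 * card nbrs = (m + r + b) + 2 * (m + r)"
    using card_K \<open>card nbrs = m + r\<close> unfolding b_def by simp
  \<comment> \<open>(m - 1) (b - 1) \<ge> 0 and m + 1 \<ge> 3\<close>
  also have "\<dots> \<le> 1 + m * 2 + r * (m + 1) + b * m"
    unfolding m' b' by (simp add: algebra_simps)
  also have "\<dots> \<le> ?c w + (\<Sum>v\<in>nbrs \<inter> D. ?c v) + (\<Sum>v\<in>nbrs - D. ?c v) + (\<Sum>v\<in>non_nbrs. ?c v)"
    using count_w sum_inside sum_outside sum_non_nbrs by linarith
  also have "\<dots> = sigma_size \<P>"
    using sigma_size_split[OF P] sum.Int_Diff[OF finite_nbrs, of ?c D] by simp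
  finally show ?thesis .
qed

lemma sigma_size_ge_if_small_cliques_through_w:
  assumes P: "clique_partition V E \<P>"
    and small: "\<And>D. D \<in> \<P> \<Longrightarrow> w \<in> D \<Longrightarrow> card (D \<inter> nbrs) \<le> 1"
  shows "card K + 2 * card nbrs \<le> sigma_size \<P>"
proof -
  let ?c = "clique_count \<P>"
  have finP: "finite \<P>" using clique_partition_finite[OF P] .
  have star_edge: "{w, x} \<in> \<P>" if x: "x \<in> nbrs" for x
  proof -
    obtain C where C: "C \<in> \<P>" "{w, x} \<subseteq> C"
      using clique_partition_coverE[OF P nbr_edge[OF x]] .
    have "z = x" if "z \<in> C \<inter> nbrs" for z
      using small[of C] C x that finite_nbrs by (auto simp: card_le_Suc0_iff_eq)
    then have "C = {w, x}" using clique_through_w_subset[OF P C(1)] C by auto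
    then show ?thesis using C by simp
  qed
  have "card nbrs \<le> ?c w"
  proof -
    have "card ((\<lambda>x. {w, x}) ` nbrs) \<le> ?c w"
      using star_edge by (intro card_le_clique_count[OF finP]) auto
    then show ?thesis using card_image[OF inj_on_doubleton[OF w_notin_nbrs]] by simp
  qed
  moreover have "card nbrs * 2 \<le> (\<Sum>v\<in>nbrs. ?c v)"
    using clique_count_nbr_ge_2[OF P star_edge] sum_bounded_below[of nbrs 2 ?c] by simp
  moreover have "card non_nbrs * 1 \<le> (\<Sum>v\<in>non_nbrs. ?c v)"
    using clique_count_pos_K[OF P] non_nbrs_subset sum_bounded_below[of non_nbrs 1 ?c] by auto
  ultimately show ?thesis using sigma_size_split[OF P] card_K by linarith
qed

lemma scp_eq_star: "scp V E = card K + 2 * card nbrs"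
proof (rule antisym[OF scp_le_star])
  obtain \<P> where P: "clique_partition V E \<P>" "scp V E = sigma_size \<P>"
    using scp_attained[OF graph] .
  show "card K + 2 * card nbrs \<le> scp V E"
  proof (cases "\<exists>D \<in> \<P>. w \<in> D \<and> 2 \<le> card (D \<inter> nbrs)")
    case True
    then show ?thesis using sigma_size_ge_if_large_clique_through_w[OF P(1)] P(2) by auto
  next
    case False
    then show ?thesis using sigma_size_ge_if_small_cliques_through_w[OF P(1)] P(2) by fastforce
  qed
qed

lemma scp_sum_eq: "scp V E + scp V (complement V E) = 3 * card V - 3"
  using scp_eq_star scp_complement card_K V_eq w_notin finite_K by simp

end

lemma scp_sum_eq_if_near_spanning_clique:
  assumes g: "graph V E" and "E \<noteq> {}" "E \<noteq> all_pairs V"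
    and "has_near_spanning_clique V E"
  shows "scp V E + scp V (complement V E) = 3 * card V - 3"
proof -
  obtain K where K: "is_clique V E K" "card K = card V - 1"
    using assms(4) unfolding has_near_spanning_clique_def by blast
  have "K \<subseteq> V" using K(1) unfolding is_clique_def by simp
  moreover have "3 \<le> card V" using card_ge_3_if_nontrivial[OF assms(1-3)] .
  ultimately have "card (V - K) = 1"
    using K(2) graph_finite[OF g] by (simp add: card_Diff_subset finite_subset)
  then obtain w where "V - K = {w}" by (rule card_1_singletonE)
  then have "V = insert w K" "w \<notin> K" using \<open>K \<subseteq> V\<close> by auto
  then interpret clique_plus_vertex V E K w
    using assms(1-3) K(1) by unfold_locales
  show ?thesis by (rule scp_sum_eq)
qed

theorem mainTheorem3:
  fixes V :: "'a set" and E :: "'a set set" and n :: nat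
  assumes "graph V E" and "card V = n"
    and "E \<noteq> {}" and "E \<noteq> all_pairs V"
  shows "scp V E + scp V (complement V E) \<ge> 3 * n - 3 \<and>
         (scp V E + scp V (complement V E) = 3 * n - 3 \<longleftrightarrow>
         (\<exists>C. is_clique V E C \<and> card C = n - 1) \<or>
         (\<exists>C. is_clique V (complement V E) C \<and> card C = n - 1))"
proof -
  note g = assms(1) and nontrivial = assms(3,4)
  have nontrivial': "complement V E \<noteq> {}" "complement V E \<noteq> all_pairs V"
    using nontrivial complement_eq_empty_iff[OF g] complement_eq_all_pairs_iff[OF g] by auto
  have iff: "(\<exists>C. is_clique V E C \<and> card C = n - 1) \<or> (\<exists>C. is_clique V (complement V E) C \<and> card C = n - 1)
    \<longleftrightarrow> has_near_spanning_clique V E \<or> has_near_spanning_clique V (complement V E)"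
    unfolding has_near_spanning_clique_def assms(2) ..
  show ?thesis
  proof (cases "has_near_spanning_clique V E \<or> has_near_spanning_clique V (complement V E)")
    case True
    then have "scp V E + scp V (complement V E) = 3 * n - 3"
      using scp_sum_eq_if_near_spanning_clique[OF g nontrivial]
        scp_sum_eq_if_near_spanning_clique[OF graph_complement[OF g] nontrivial']
      unfolding complement_complement[OF g] assms(2) by auto
    then show ?thesis using True iff by simp
  next
    case False
    then have "3 * n - 2 \<le> scp V E + scp V (complement V E)"
      using scp_sum_ge_if_no_near_spanning_clique[OF g nontrivial] assms(2) by simp
    moreover have "3 \<le> n" using card_ge_3_if_nontrivial[OF g nontrivial] assms(2) by simp
    ultimately show ?thesis using False iff by auto
  qed
qed

end
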